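(* The degrees of the state polynomials of 2-bridge knots are independent of the degrees of their Alexander polynomials. Specifically: (i) for every $N$ there exists a 2-bridge knot having an essential spanning surface whose state polynomial is linear (degree 1) while its Alexander polynomial has degree at least $N$ (e.g. the $(2,m)$ torus knot, $m$ odd, has a state polynomial of degree $1$ and Alexander polynomial of degree $m-1$); (ii) for every $N$ there exists a 2-bridge knot whose Alexander polynomial is quadratic and which has an essential spanning surface whose state polynomial has degree at least $N$ (e.g. the 2-bridge knot with continued fraction expansion $[2i,2j]$ has quadratic Alexander polynomial and state polynomials of degrees $2i$ and $2j$).
   Context: Let $K=K(\alpha,\beta)$ be a 2-bridge knot. Essential spanning surfaces $S$ ($\partial S=K$, incompressible and $\partial$-incompressible in the knot exterior) are, by Hatcher–Thurston, isotopic to standard plumbed surfaces associated to continued fraction expansions $\beta/\alpha=r+\cfrac{1}{n_1+\cfrac{1}{\cdots+\cfrac{1}{n_k}}}$, $|n_i|\ge2$, written $[n_1,\dots,n_k]$: $k$ vertically stacked bands, the $i$-th with $n_i$ half-twists, each with a parallel untwisted band, joined by horizontal disks at levels $0,\dots,k$. The curve system $x_1,\dots,x_k$ consists of the cores of the $k$ boxes; $x_i\cap x_{i+1}$ is one point, others disjoint. A state matrix $V_S$ has entries $v_{ij}=\mathrm{lk}(x_i,x_j^{i*})$ for $i\neq j$, where $x_j^{i*}$ is $x_j$ pushed off along a chosen normal near the intersection point with $x_i$ (and equal to $x_j$ if disjoint), and $v_{ii}=\frac12\mathrm{lk}(x_i,\tau(x_i))$, $\tau(x_i)$ the double push-off of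 $x_i$ to both sides of $S$. The state polynomial is $\Delta_S(t)=\det(V_S-tV_S^T)$ up to units $\pm t^m$, of degree $k$. When $S$ is orientable (all $n_i$ even; this is the unique Seifert surface among them, of minimal genus), $\Delta_S$ is the Alexander polynomial of $K$. *)

theory Defs
  imports "Jordan_Normal_Form.Determinant" "HOL-Computational_Algebra.Polynomial"
begin

text \<open>Combinatorial model (via Hatcher--Thurston) of 2-bridge knots, their essential
spanning surfaces (continued fraction expansions) and their state matrices.\<close>

text \<open>2-bridge knot K(alpha,beta): alpha odd (a knot, not a link), alpha > 1,
0 < beta < alpha, gcd(alpha,beta) = 1.\<close>
definition two_bridge_knot :: "int \<Rightarrow> int \<Rightarrow> bool" where
  "two_bridge_knot \<alpha> \<beta> \<longleftrightarrow> odd \<alpha> \<and> 1 < \<alpha> \<and> 0 < \<beta> \<and> \<beta> < \<alpha> \<and> coprime \<alpha> \<beta>"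

fun cf :: "int list \<Rightarrow> rat" where
  "cf [] = 0"
| "cf (n # ns) = 1 / (of_int n + cf ns)"

text \<open>Essential spanning surfaces of K(alpha,beta), represented by the continued fraction
expansion [n1,...,nk] (|ni| >= 2) of the associated standard plumbed surface.\<close>
definition essential_surface :: "int \<Rightarrow> int \<Rightarrow> int list \<Rightarrow> bool" where
  "essential_surface \<alpha> \<beta> ns \<longleftrightarrow> ns \<noteq> [] \<and> (\<forall>n \<in> set ns. 2 \<le> \<bar>n\<bar>) \<and>
     (\<exists>r::int. of_int \<beta> / of_int \<alpha> = of_int r + cf ns)"

definition orientable_surface :: "int list \<Rightarrow> bool" where
  "orientable_surface ns \<longleftrightarrow> (\<forall>n \<in> set ns. even n)"

text \<open>Diagonal: half the linking number of x_i with its double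
push-off, n_i/2. Adjacent cores x_i, x_(i+1) meet once; the push-off direction chosen at that
point (side i) makes one of the two linking numbers 0 and the other +-1 (sign e i).\<close>
definition state_entry :: "int list \<Rightarrow> (nat \<Rightarrow> bool) \<Rightarrow> (nat \<Rightarrow> bool) \<Rightarrow> nat \<Rightarrow> nat \<Rightarrow> rat" where
  "state_entry ns side e i j =
     (if i = j then of_int (ns ! i) / 2
      else if j = Suc i then (if side i then (if e i then 1 else -1) else 0)
      else if i = Suc j then (if side j then 0 else (if e j then 1 else -1))
      else 0)"

definition state_matrix :: "int list \<Rightarrow> (nat \<Rightarrow> bool) \<Rightarrow> (nat \<Rightarrow> bool) \<Rightarrow> rat mat" where
  "state_matrix ns side e = mat (length ns) (length ns) (\<lambda>(i,j). state_entry ns side e i j)"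

definition state_poly :: "int list \<Rightarrow> (nat \<Rightarrow> bool) \<Rightarrow> (nat \<Rightarrow> bool) \<Rightarrow> rat poly" where
  "state_poly ns side e =
     det (mat (length ns) (length ns)
       (\<lambda>(i,j). [: state_matrix ns side e $$ (i,j), - (state_matrix ns side e $$ (j,i)) :]))"

text \<open>Degree of a polynomial up to units +-t^m: highest minus lowest exponent.\<close>
definition poly_span :: "rat poly \<Rightarrow> nat" where
  "poly_span p = degree p - order 0 p"

end

theory Submission
  imports Defs
begin

text \<open>The matrix V - t V^T is tridiagonal, and expanding along the last row gives the
recurrence D(k+2) = (n(k+2)/2) (1 - t) D(k+1) + t D(k) for its leading principal minors.
Hence the state polynomial has constant term \<Prod> n(i)/2 and coefficient \<Prod> -n(i)/2 in
degree k, so its span is exactly the length k of the expansion, for every choice of push-offs.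
The theorem therefore reduces to lengths of continued fraction expansions. An expansion with
all entries even is determined by its value (the reciprocal of the value lies within 1 of a
single even integer, the first entry), and no even expansion has value 1/m with m odd.
So K(m,1), m odd, has the one-term surface [m], while its only orientable surface is
[-2, 2, ..., -2] of length m - 1; and K(4J+1, 2J) has the orientable surface [2, 2J] only,
but also the non-orientable surface [3, -2, 2, ..., -2] of length 2J.\<close>

lemma det_tridiagonal_rec:
  fixes A :: "nat \<Rightarrow> nat \<Rightarrow> 'a::comm_ring_1"
  assumes tridiagonal: "\<And>i j. j + 1 < i \<or> i + 1 < j \<Longrightarrow> A i j = 0"
  shows "det (mat (k+2) (k+2) (\<lambda>(i,j). A i j)) =
     A (k+1) (k+1) * det (mat (k+1) (k+1) (\<lambda>(i,j). A i j))
     - A k (k+1) * A (k+1) k * det (mat k k (\<lambda>(i,j). A i j))"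
proof -
  define M where "M = mat (k+2) (k+2) (\<lambda>(i,j). A i j)"
  have M: "M \<in> carrier_mat (k+2) (k+2)" unfolding M_def by auto
  have "det M = (\<Sum>j<k+2. M $$ (k+1,j) * cofactor M (k+1) j)"
    by (rule laplace_expansion_row[OF M]) simp
  also have "\<dots> = (\<Sum>j<k. M $$ (k+1,j) * cofactor M (k+1) j)
      + M $$ (k+1,k) * cofactor M (k+1) k + M $$ (k+1,k+1) * cofactor M (k+1) (k+1)"
    by (simp add: numeral_2_eq_2)
  also have "(\<Sum>j<k. M $$ (k+1,j) * cofactor M (k+1) j) = 0"
    by (rule sum.neutral) (auto simp: M_def tridiagonal)
  also have "mat_delete M (k+1) (k+1) = mat (k+1) (k+1) (\<lambda>(i,j). A i j)"
    by (rule eq_matI) (auto simp: M_def mat_delete_def)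
  hence "cofactor M (k+1) (k+1) = det (mat (k+1) (k+1) (\<lambda>(i,j). A i j))"
    by (simp add: cofactor_def)
  also have "cofactor M (k+1) k = - det (mat_delete M (k+1) k)"
    by (simp add: cofactor_def)
  also have "det (mat_delete M (k+1) k) = A k (k+1) * det (mat k k (\<lambda>(i,j). A i j))"
  proof -
    define B where "B = mat_delete M (k+1) k"
    have B: "B \<in> carrier_mat (k+1) (k+1)" unfolding B_def M_def mat_delete_def by auto
    have B_entry: "\<And>i j. i < k+1 \<Longrightarrow> j < k+1 \<Longrightarrow> B $$ (i,j) = A i (if j < k then j else Suc j)"
      by (simp add: B_def M_def mat_delete_def)
    have "det B = (\<Sum>i<k+1. B $$ (i,k) * cofactor B i k)"
      by (rule laplace_expansion_column[OF B]) simp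
    also have "\<dots> = (\<Sum>i<k. B $$ (i,k) * cofactor B i k) + B $$ (k,k) * cofactor B k k"
      by simp
    also have "(\<Sum>i<k. B $$ (i,k) * cofactor B i k) = 0"
      by (rule sum.neutral) (auto simp: B_entry tridiagonal)
    also have "mat_delete B k k = mat k k (\<lambda>(i,j). A i j)"
      by (rule eq_matI) (auto simp: B_def M_def mat_delete_def)
    hence "cofactor B k k = det (mat k k (\<lambda>(i,j). A i j))"
      by (simp add: cofactor_def)
    also have "B $$ (k,k) = A k (k+1)" using B_entry[of k k] by simp
    finally show ?thesis by (simp add: B_def)
  qed
  finally show ?thesis by (simp add: M_def algebra_simps)
qed

definition state_minor :: "int list \<Rightarrow> (nat \<Rightarrow> bool) \<Rightarrow> (nat \<Rightarrow> bool) \<Rightarrow> nat \<Rightarrow> rat poly" where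
  "state_minor ns side e k =
     det (mat k k (\<lambda>(i,j). [: state_entry ns side e i j, - state_entry ns side e j i :]))"

lemma state_poly_eq_state_minor: "state_poly ns side e = state_minor ns side e (length ns)"
  unfolding state_poly_def state_minor_def
  by (rule arg_cong[where f = det], rule eq_matI) (auto simp: state_matrix_def)

lemma state_minor_0: "state_minor ns side e 0 = 1"
  by (simp add: state_minor_def)

lemma state_minor_1: "state_minor ns side e 1 = [: of_int (ns!0) / 2, - of_int (ns!0) / 2 :]"
  unfolding state_minor_def by (subst det_single) (auto simp: state_entry_def)

text \<open>Whatever the sides and signs, the two off-diagonal entries at an intersection point
contribute the product -t.\<close>
lemma state_minor_Suc_Suc:
  "state_minor ns side e (Suc (Suc k)) =
     [: of_int (ns!Suc k) / 2, - of_int (ns!Suc k) / 2 :] * state_minor ns side e (Suc k)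
     + [:0,1:] * state_minor ns side e k"
proof -
  let ?A = "\<lambda>i j. [: state_entry ns side e i j, - state_entry ns side e j i :]"
  have "?A k (k+1) * ?A (k+1) k = - [:0,1:]"
    by (auto simp: state_entry_def)
  moreover have "?A (k+1) (k+1) = [: of_int (ns!Suc k) / 2, - of_int (ns!Suc k) / 2 :]"
    by (simp add: state_entry_def)
  moreover have "\<And>i j. j + 1 < i \<or> i + 1 < j \<Longrightarrow> ?A i j = 0"
    by (auto simp: state_entry_def)
  from det_tridiagonal_rec[of ?A, OF this, of k]
  have "state_minor ns side e (Suc (Suc k)) = ?A (k+1) (k+1) * state_minor ns side e (Suc k)
      - ?A k (k+1) * ?A (k+1) k * state_minor ns side e k"
    unfolding state_minor_def by simp
  ultimately show ?thesis by (simp only: mult_minus_left diff_minus_eq_add)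
qed

lemma state_minor_degree_coeffs:
  fixes ns :: "int list"
  defines "c \<equiv> \<lambda>i. of_int (ns!i) / 2 :: rat"
  shows "degree (state_minor ns side e k) \<le> k
    \<and> coeff (state_minor ns side e k) 0 = (\<Prod>i<k. c i)
    \<and> coeff (state_minor ns side e k) k = (\<Prod>i<k. - c i)"
proof (induction k rule: induct_nat_012)
  case 0 show ?case by (simp add: state_minor_0)
next
  case 1 show ?case by (simp add: state_minor_1[unfolded One_nat_def] c_def)
next
  case (ge2 k)
  let ?P = "state_minor ns side e (Suc k)" and ?R = "state_minor ns side e k"
  have expand: "state_minor ns side e (Suc (Suc k)) =
      smult (c (Suc k)) ?P + pCons 0 (smult (- c (Suc k)) ?P) + pCons 0 ?R"
    unfolding state_minor_Suc_Suc c_def by (simp add: mult_pCons_left)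
  have "degree (state_minor ns side e (Suc (Suc k))) \<le> Suc (Suc k)"
    unfolding expand using ge2
    by (intro degree_add_le) (auto intro: order.trans[OF degree_smult_le] simp: degree_pCons_eq_if)
  moreover have "coeff ?P (Suc (Suc k)) = 0" "coeff ?R (Suc k) = 0"
    using ge2 by (auto intro: coeff_eq_0)
  ultimately show ?case
    using ge2 by (simp add: expand algebra_simps)
qed

lemma poly_span_state_poly:
  assumes "0 \<notin> set ns"
  shows "poly_span (state_poly ns side e) = length ns"
proof -
  let ?p = "state_minor ns side e (length ns)"
  have nonzero: "of_int (ns!i) / 2 \<noteq> (0::rat)" if "i < length ns" for i
    using assms that nth_mem by fastforce
  have p: "degree ?p \<le> length ns" "coeff ?p 0 \<noteq> 0" "coeff ?p (length ns) \<noteq> 0"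
    using state_minor_degree_coeffs[of ns side e "length ns"] nonzero by auto
  have "degree ?p = length ns"
    using p(1,3) by (meson le_antisym le_degree)
  moreover have "order 0 ?p = 0"
    using p(2) by (intro order_0I) (simp add: poly_0_coeff_0)
  ultimately show ?thesis
    by (simp add: poly_span_def state_poly_eq_state_minor)
qed

lemma cf_abs_less_1: "\<forall>n \<in> set ns. 2 \<le> \<bar>n\<bar> \<Longrightarrow> \<bar>cf ns\<bar> < 1"
proof (induction ns)
  case (Cons n ns)
  then have "\<bar>cf ns\<bar> < 1" "2 \<le> \<bar>of_int n :: rat\<bar>"
    by (auto simp flip: of_int_abs)
  then have "1 < \<bar>of_int n + cf ns\<bar>" by linarith
  then show ?case by (simp add: abs_divide divide_less_eq)
qed simp

lemma even_plus_small_unique: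
  fixes c c' :: rat
  assumes "even n" "even n'" "\<bar>c\<bar> < 1" "\<bar>c'\<bar> < 1" "of_int n + c = of_int n' + c'"
  shows "n = n' \<and> c = c'"
proof -
  have "\<bar>of_int (n - n') :: rat\<bar> < 2" using assms(3-5) by simp
  then have "\<bar>n - n'\<bar> < 2" by linarith
  moreover have "even (n - n')" using assms(1,2) by simp
  ultimately have "n = n'" by presburger
  then show ?thesis using assms(5) by simp
qed

lemma cf_eq_0_iff:
  assumes "\<forall>n \<in> set ns. 2 \<le> \<bar>n\<bar>"
  shows "cf ns = 0 \<longleftrightarrow> ns = []"
proof (cases ns)
  case (Cons n T)
  with assms have "\<bar>cf T\<bar> < 1" "2 \<le> \<bar>of_int n :: rat\<bar>"
    by (auto intro: cf_abs_less_1 simp flip: of_int_abs)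
  then have "of_int n + cf T \<noteq> 0" by linarith
  then show ?thesis using Cons by simp
qed simp

lemma even_cf_unique:
  assumes "\<forall>n \<in> set S. 2 \<le> \<bar>n\<bar>" "orientable_surface S"
    and "\<forall>n \<in> set S'. 2 \<le> \<bar>n\<bar>" "orientable_surface S'"
    and "cf S = cf S'"
  shows "S = S'"
  using assms
proof (induction S arbitrary: S')
  case Nil
  then show ?case using cf_eq_0_iff[of S'] by simp
next
  case (Cons n T)
  then have "cf S' \<noteq> 0" using cf_eq_0_iff[of "n # T"] by simp
  then obtain n' T' where S': "S' = n' # T'" by (cases S') auto
  from Cons.prems have "of_int n + cf T = of_int n' + cf T'"
    by (simp add: S' divide_eq_eq split: if_splits)
  moreover have "\<bar>cf T\<bar> < 1" "\<bar>cf T'\<bar> < 1"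
    using Cons.prems by (auto simp: S' intro: cf_abs_less_1)
  moreover have "even n" "even n'"
    using Cons.prems by (auto simp: S' orientable_surface_def)
  ultimately have "n = n'" and cf_tail: "cf T = cf T'"
    using even_plus_small_unique by blast+
  moreover have "T = T'"
    by (rule Cons.IH) (use Cons.prems cf_tail in \<open>auto simp: S' orientable_surface_def\<close>)
  ultimately show ?case by (simp add: S')
qed

lemma cf_even_ne_inverse_odd:
  assumes "\<forall>n \<in> set S. 2 \<le> \<bar>n\<bar>" "orientable_surface S" "odd m"
  shows "cf S \<noteq> 1 / of_int m"
proof
  assume eq: "cf S = 1 / of_int m"
  have "m \<noteq> 0" using assms(3) by presburger
  with eq assms(1) obtain n T where S: "S = n # T"
    using cf_eq_0_iff by (cases S) auto
  with eq \<open>m \<noteq> 0\<close> have "of_int (m - n) = cf T"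
    by (simp add: divide_eq_eq split: if_splits)
  moreover have "\<bar>cf T\<bar> < 1" using assms(1) S by (auto intro: cf_abs_less_1)
  ultimately have "\<bar>m - n\<bar> < 1"
    by (metis of_int_abs of_int_less_1_iff)
  then have "m = n" by simp
  then show False using assms(2,3) S by (simp add: orientable_surface_def)
qed

fun alternating_twos :: "int \<Rightarrow> nat \<Rightarrow> int list" where
  "alternating_twos s 0 = []"
| "alternating_twos s (Suc j) = 2 * s # alternating_twos (- s) j"

lemma length_alternating_twos [simp]: "length (alternating_twos s j) = j"
  by (induction j arbitrary: s) auto

lemma alternating_twos_elem:
  "x \<in> set (alternating_twos s j) \<Longrightarrow> \<bar>x\<bar> = 2 * \<bar>s\<bar> \<and> even x"
  by (induction j arbitrary: s) fastforce+

lemma cf_alternating_twos: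
  assumes "s = 1 \<or> s = -1"
  shows "cf (alternating_twos s j) = of_int s * of_nat j / (of_nat j + 1)"
  using assms
proof (induction j arbitrary: s)
  case (Suc j)
  then have "cf (alternating_twos s (Suc j)) = 1 / (2 * of_int s - of_int s * of_nat j / (of_nat j + 1))"
    by auto
  also have "\<dots> = of_int s * of_nat (Suc j) / (of_nat (Suc j) + 1)"
    using Suc.prems by (auto simp: field_simps)
  finally show ?case .
qed simp

lemma alternating_twos_even_admissible:
  assumes "s = 1 \<or> s = -1"
  shows "\<forall>n \<in> set (alternating_twos s j). 2 \<le> \<bar>n\<bar>"
    and "orientable_surface (alternating_twos s j)"
  using assms alternating_twos_elem[of _ s j] by (auto simp: orientable_surface_def)

lemma essential_surface_admissible:
  "essential_surface \<alpha> \<beta> S \<Longrightarrow> \<forall>n \<in> set S. 2 \<le> \<bar>n\<bar>"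
  by (simp add: essential_surface_def)

lemma essential_surface_cf_cases:
  assumes "essential_surface \<alpha> \<beta> S" "0 < \<beta>" "\<beta> < \<alpha>"
  shows "cf S = of_int \<beta> / of_int \<alpha> \<or> cf S = of_int \<beta> / of_int \<alpha> - 1"
proof -
  obtain r :: int where r: "of_int \<beta> / of_int \<alpha> = of_int r + cf S"
    using assms(1) unfolding essential_surface_def by blast
  have "\<bar>cf S\<bar> < 1"
    using cf_abs_less_1[OF essential_surface_admissible[OF assms(1)]] .
  moreover have "0 < (of_int \<beta> / of_int \<alpha> :: rat)" "(of_int \<beta> / of_int \<alpha> :: rat) < 1"
    using assms(2,3) by auto
  ultimately have "(of_int r :: rat) > -1" "(of_int r :: rat) < 2"
    using r by linarith+
  then have "r = 0 \<or> r = 1" by simp linarith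
  then show ?thesis using r by auto
qed

lemma poly_span_state_poly_essential_surface:
  "essential_surface \<alpha> \<beta> S \<Longrightarrow> poly_span (state_poly S side e) = length S"
  by (rule poly_span_state_poly) (force simp: essential_surface_def)

lemma torus_knot_essential_surfaces:
  assumes "odd m" "3 \<le> m"
  shows "two_bridge_knot m 1"
    and "essential_surface m 1 [m]"
    and "essential_surface m 1 (alternating_twos (-1) (nat (m - 1)))"
    and "orientable_surface (alternating_twos (-1) (nat (m - 1)))"
proof -
  show "two_bridge_knot m 1" "essential_surface m 1 [m]"
    using assms by (auto simp: two_bridge_knot_def essential_surface_def intro: exI[of _ 0])
  have "of_nat (nat (m - 1)) = (of_int m - 1 :: rat)"
    using assms(2) by simp
  then have "of_int 1 / of_int m = of_int 1 + cf (alternating_twos (-1) (nat (m - 1)))"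
    using assms(2) by (simp add: cf_alternating_twos field_simps)
  then show "essential_surface m 1 (alternating_twos (-1) (nat (m - 1)))"
    "orientable_surface (alternating_twos (-1) (nat (m - 1)))"
    using alternating_twos_even_admissible[of "-1"] assms(2)
    unfolding essential_surface_def by auto
qed

lemma torus_knot_orientable_surface_unique:
  assumes "odd m" "3 \<le> m" "essential_surface m 1 S" "orientable_surface S"
  shows "S = alternating_twos (-1) (nat (m - 1))"
proof -
  note S = essential_surface_admissible[OF assms(3)] assms(4)
  have "cf S \<noteq> 1 / of_int m"
    using cf_even_ne_inverse_odd[OF S assms(1)] .
  then have "cf S = 1 / of_int m - 1"
    using essential_surface_cf_cases[OF assms(3)] assms(2) by auto
  also have "\<dots> = cf (alternating_twos (-1) (nat (m - 1)))"
    using assms(2) by (simp add: cf_alternating_twos of_nat_diff field_simps)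
  finally show ?thesis
    using even_cf_unique[OF S] alternating_twos_even_admissible[of "-1"] by simp
qed

text \<open>2J/(4J+1) = [2, 2J] = [3, -2, 2, -2, ..., -2], the latter with 2J - 1 alternating terms.\<close>
lemma quadratic_example_essential_surfaces:
  assumes "1 \<le> J"
  shows "two_bridge_knot (4 * int J + 1) (2 * int J)"
    and "essential_surface (4 * int J + 1) (2 * int J) (3 # alternating_twos (-1) (2 * J - 1))"
    and "essential_surface (4 * int J + 1) (2 * int J) [2, 2 * int J]"
    and "orientable_surface [2, 2 * int J]"
proof -
  have "coprime (4 * int J + 1) (2 * int J)"
    using coprime_add_one_left[of "2 * (2 * int J)"] by (simp add: coprime_mult_right_iff)
  then show "two_bridge_knot (4 * int J + 1) (2 * int J)"
    using assms by (simp add: two_bridge_knot_def)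
  have ratio: "of_int (2 * int J) / of_int (4 * int J + 1) = (2 * of_nat J / (4 * of_nat J + 1) :: rat)"
    by simp
  have "cf (alternating_twos (-1) (2 * J - 1)) = (1 - 2 * of_nat J) / (2 * of_nat J)"
    using assms by (simp add: cf_alternating_twos of_nat_diff)
  then have "cf (3 # alternating_twos (-1) (2 * J - 1)) = 1 / (3 + (1 - 2 * of_nat J) / (2 * of_nat J))"
    by simp
  also have "\<dots> = 2 * of_nat J / (4 * of_nat J + 1)"
    using assms by (simp add: field_simps)
  finally have "cf (3 # alternating_twos (-1) (2 * J - 1)) = 2 * of_nat J / (4 * of_nat J + 1)" .
  then show "essential_surface (4 * int J + 1) (2 * int J) (3 # alternating_twos (-1) (2 * J - 1))"
    using alternating_twos_even_admissible[of "-1"]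
    unfolding essential_surface_def ratio by (auto intro: exI[of _ 0])
  have "cf [2, 2 * int J] = 2 * of_nat J / (4 * of_nat J + 1)"
    using assms by (simp add: field_simps)
  then show "essential_surface (4 * int J + 1) (2 * int J) [2, 2 * int J]"
    "orientable_surface [2, 2 * int J]"
    using assms unfolding essential_surface_def orientable_surface_def ratio
    by (auto intro: exI[of _ 0])
qed

lemma quadratic_example_orientable_surface_unique:
  assumes "1 \<le> J" "essential_surface (4 * int J + 1) (2 * int J) S" "orientable_surface S"
  shows "S = [2, 2 * int J]"
proof -
  note S = essential_surface_admissible[OF assms(2)] assms(3)
  note T = essential_surface_admissible[OF quadratic_example_essential_surfaces(3)[OF assms(1)]]
    quadratic_example_essential_surfaces(4)[OF assms(1)]
  have "cf S \<noteq> 2 * of_nat J / (4 * of_nat J + 1) - 1"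
  proof
    assume cf_S': "cf S = 2 * of_nat J / (4 * of_nat J + 1) - 1"
    then obtain n T where S_Cons: "S = n # T"
      by (cases S) (auto simp: field_simps)
    have cf_S: "cf S = 1 / (of_int (-2) + 1 / of_int (2 * int J + 1))"
      using cf_S' assms(1) by (simp add: field_simps)
    have "\<bar>cf T\<bar> < 1" "even n"
      using S S_Cons cf_abs_less_1 by (auto simp: orientable_surface_def)
    moreover have "\<bar>1 / of_int (2 * int J + 1)\<bar> < (1::rat)"
      using assms(1) by simp
    moreover have "of_int n + cf T = of_int (-2) + 1 / of_int (2 * int J + 1)"
      using cf_S S_Cons assms(1) by (simp add: divide_eq_eq split: if_splits)
    ultimately have "cf T = 1 / of_int (2 * int J + 1)"
      using even_plus_small_unique[of n "-2"] by auto
    moreover have "\<forall>n \<in> set T. 2 \<le> \<bar>n\<bar>" "orientable_surface T"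
      using S S_Cons by (auto simp: orientable_surface_def)
    ultimately show False
      using cf_even_ne_inverse_odd[of T "2 * int J + 1"] by simp
  qed
  then have "cf S = 2 * of_nat J / (4 * of_nat J + 1)"
    using essential_surface_cf_cases[OF assms(2)] assms(1) by auto
  also have "\<dots> = cf [2, 2 * int J]"
    using assms(1) by (simp add: field_simps)
  finally show ?thesis
    using even_cf_unique[OF S T] by simp
qed

theorem proposition3p2:
  shows "(\<forall>N::nat. \<exists>\<alpha> \<beta> ns. two_bridge_knot \<alpha> \<beta> \<and> essential_surface \<alpha> \<beta> ns \<and>
            (\<forall>side e. poly_span (state_poly ns side e) = 1) \<and>
            (\<exists>S. essential_surface \<alpha> \<beta> S \<and> orientable_surface S) \<and>
            (\<forall>S side e. essential_surface \<alpha> \<beta> S \<and> orientable_surface S \<longrightarrow>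
                 N \<le> poly_span (state_poly S side e)))
   \<and> (\<forall>N::nat. \<exists>\<alpha> \<beta> ns. two_bridge_knot \<alpha> \<beta> \<and> essential_surface \<alpha> \<beta> ns \<and>
            (\<forall>side e. N \<le> poly_span (state_poly ns side e)) \<and>
            (\<exists>S. essential_surface \<alpha> \<beta> S \<and> orientable_surface S) \<and>
            (\<forall>S side e. essential_surface \<alpha> \<beta> S \<and> orientable_surface S \<longrightarrow>
                 poly_span (state_poly S side e) = 2))"
proof (intro conjI allI)
  fix N :: nat
  define m where "m = 2 * int N + 3"
  have m: "odd m" "3 \<le> m" by (simp_all add: m_def)
  note K = torus_knot_essential_surfaces[OF m]
  have "N \<le> poly_span (state_poly S side e)"
    if "essential_surface m 1 S" "orientable_surface S" for S side e
    using torus_knot_orientable_surface_unique[OF m that] poly_span_state_poly_essential_surface[OF that(1)]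
    by (simp add: m_def)
  then show "\<exists>\<alpha> \<beta> ns. two_bridge_knot \<alpha> \<beta> \<and> essential_surface \<alpha> \<beta> ns \<and>
            (\<forall>side e. poly_span (state_poly ns side e) = 1) \<and>
            (\<exists>S. essential_surface \<alpha> \<beta> S \<and> orientable_surface S) \<and>
            (\<forall>S side e. essential_surface \<alpha> \<beta> S \<and> orientable_surface S \<longrightarrow>
                 N \<le> poly_span (state_poly S side e))"
    using K poly_span_state_poly_essential_surface[OF K(2)] by (intro exI[of _ m] exI[of _ 1]) fastforce
next
  fix N :: nat
  have J: "1 \<le> N + 1" by simp
  note K = quadratic_example_essential_surfaces[OF J]
  have "poly_span (state_poly S side e) = 2"
    if "essential_surface (4 * int (N + 1) + 1) (2 * int (N + 1)) S" "orientable_surface S" for S side e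
    using quadratic_example_orientable_surface_unique[OF J that] poly_span_state_poly_essential_surface[OF that(1)]
    by simp
  then show "\<exists>\<alpha> \<beta> ns. two_bridge_knot \<alpha> \<beta> \<and> essential_surface \<alpha> \<beta> ns \<and>
            (\<forall>side e. N \<le> poly_span (state_poly ns side e)) \<and>
            (\<exists>S. essential_surface \<alpha> \<beta> S \<and> orientable_surface S) \<and>
            (\<forall>S side e. essential_surface \<alpha> \<beta> S \<and> orientable_surface S \<longrightarrow>
                 poly_span (state_poly S side e) = 2)"
    using K poly_span_state_poly_essential_surface[OF K(2)] by (intro exI) fastforce
qed

end
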